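(* Let $\kappa$ be any cardinal. The functors $N:\mathbf{MKF}_\kappa\to\mathbf{NFR}_\kappa$ and $H:\mathbf{NFR}_\kappa\to\mathbf{MKF}_\kappa$ form an equivalence of categories: for every $\kappa$-downward directed multi-relational Kripke frame $M=\langle W,S\rangle$, the identity map on $W$ is an isomorphism of multi-relational Kripke frames $M\to H(N(M))$, and for every $\kappa$-complete neighborhood frame $Z=\langle C,\nu\rangle$, the identity map on $C$ is an isomorphism of neighborhood frames $Z\to N(H(Z))$ (these identities being natural).
   Context: For a binary relation $R$ on $W$ and $x\in W$, $R[x]=\{y\in W\mid xRy\}$. A multi-relational Kripke frame is a pair $\langle W,S\rangle$ where $W$ is a non-empty set and $S$ is a non-empty set of binary relations on $W$. For a cardinal $\kappa$, it is $\kappa$-downward directed if for every $S'\subseteq S$ with $|S'|<\kappa$ there is $R\in S$ with $R\subseteq\bigcap S'$ (with $\bigcap\emptyset=W\times W$). A homomorphism of multi-relational Kripke frames $f:\langle W_1,S_1\rangle\to\langle W_2,S_2\rangle$ is a map $f:W_1\to W_2$ such that: (i) for every $x\in W_1$ and $R_2\in S_2$ there is $R_1\in S_1$ such that for all $y\in W_1$, $xR_1y$ implies $f(x)R_2f(y)$; (ii) for every $x\in W_1$ and $R_1\in S_1$ there is $R_2\in S_2$ such that for all $u\in W_2$, if $f(x)R_2u$ then there exists $y\in W_1$ with $xR_1y$ and $f(y)=u$. An isomorphism is a bijective homomorphism. $\mathbf{MKF}_\kappa$ is the category of $\kappa$-downward directed multi-relational Kripke frames with these homomorphisms. A neighborhood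 frame is a pair $\langle C,\nu\rangle$ with $C$ non-empty and $\nu:C\to\mathcal P(\mathcal P(C))$. It is $\kappa$-complete if $C\in\nu(c)$ for all $c$, $\nu(c)$ is upward closed under $\subseteq$ for all $c$, and $\bigcap S'\in\nu(c)$ for every $c\in C$ and every non-empty $S'\subseteq\nu(c)$ with $|S'|<\kappa$. A homomorphism of neighborhood frames $f:\langle C_1,\nu_1\rangle\to\langle C_2,\nu_2\rangle$ is a map $f:C_1\to C_2$ such that for all $c\in C_1$, $X\subseteq C_2$: $f^{-1}[X]\in\nu_1(c)\iff X\in\nu_2(f(c))$. $\mathbf{NFR}_\kappa$ is the category of $\kappa$-complete neighborhood frames with these homomorphisms. $N(\langle W,S\rangle)=\langle W,\nu_M\rangle$ with $\nu_M(x)=\{Y\subseteq W\mid R[x]\subseteq Y\text{ for some }R\in S\}$, and $N(f)=f$. $H(\langle C,\nu\rangle)=\langle C,\{R_v\mid v\in V_Z\}\rangle$ where $V_Z$ is the set of maps $v:C\to\mathcal P(C)$ with $v(x)\in\nu(x)$ for all $x$ and $R_v=\{(x,y)\mid y\in v(x)\}$; $H(f)=f$. *)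

theory Defs
  imports Main
begin

(* Cardinals are represented by cardinal orders  k :: 'k rel  with  Card_order k;
   "|S'| < kappa" is  (card_of S', k) \<in> ordLess. *)

type_synonym 'a mkf = "'a set \<times> ('a \<times> 'a) set set"
type_synonym 'a nfr = "'a set \<times> ('a \<Rightarrow> 'a set set)"

definition Rimg :: "('a \<times> 'a) set \<Rightarrow> 'a \<Rightarrow> 'a set" where
  "Rimg R x = {y. (x, y) \<in> R}"

definition mkf :: "'a mkf \<Rightarrow> bool" where
  "mkf M \<longleftrightarrow> fst M \<noteq> {} \<and> snd M \<noteq> {} \<and> (\<forall>R\<in>snd M. R \<subseteq> fst M \<times> fst M)"

definition downward_directed :: "'k rel \<Rightarrow> 'a mkf \<Rightarrow> bool" where
  "downward_directed k M \<longleftrightarrow>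
     (\<forall>S'. S' \<subseteq> snd M \<and> (card_of S', k) \<in> ordLess \<longrightarrow>
        (\<exists>R\<in>snd M. R \<subseteq> (fst M \<times> fst M) \<inter> \<Inter>S'))"

definition MKF :: "'k rel \<Rightarrow> 'a mkf \<Rightarrow> bool" where
  "MKF k M \<longleftrightarrow> mkf M \<and> downward_directed k M"

definition mkf_hom :: "('a \<Rightarrow> 'b) \<Rightarrow> 'a mkf \<Rightarrow> 'b mkf \<Rightarrow> bool" where
  "mkf_hom f M1 M2 \<longleftrightarrow>
     (\<forall>x\<in>fst M1. f x \<in> fst M2) \<and>
     (\<forall>x\<in>fst M1. \<forall>R2\<in>snd M2. \<exists>R1\<in>snd M1. \<forall>y\<in>fst M1.
         (x, y) \<in> R1 \<longrightarrow> (f x, f y) \<in> R2) \<and>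
     (\<forall>x\<in>fst M1. \<forall>R1\<in>snd M1. \<exists>R2\<in>snd M2. \<forall>u\<in>fst M2.
         (f x, u) \<in> R2 \<longrightarrow> (\<exists>y\<in>fst M1. (x, y) \<in> R1 \<and> f y = u))"

definition mkf_iso :: "('a \<Rightarrow> 'b) \<Rightarrow> 'a mkf \<Rightarrow> 'b mkf \<Rightarrow> bool" where
  "mkf_iso f M1 M2 \<longleftrightarrow> mkf_hom f M1 M2 \<and> bij_betw f (fst M1) (fst M2)"

definition nfr :: "'a nfr \<Rightarrow> bool" where
  "nfr Z \<longleftrightarrow> fst Z \<noteq> {} \<and> (\<forall>c\<in>fst Z. snd Z c \<subseteq> Pow (fst Z))"

definition complete :: "'k rel \<Rightarrow> 'a nfr \<Rightarrow> bool" where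
  "complete k Z \<longleftrightarrow>
     (\<forall>c\<in>fst Z. fst Z \<in> snd Z c) \<and>
     (\<forall>c\<in>fst Z. \<forall>X Y. X \<in> snd Z c \<and> X \<subseteq> Y \<and> Y \<subseteq> fst Z \<longrightarrow> Y \<in> snd Z c) \<and>
     (\<forall>c\<in>fst Z. \<forall>S'. S' \<noteq> {} \<and> S' \<subseteq> snd Z c \<and> (card_of S', k) \<in> ordLess
         \<longrightarrow> \<Inter>S' \<in> snd Z c)"

definition NFR :: "'k rel \<Rightarrow> 'a nfr \<Rightarrow> bool" where
  "NFR k Z \<longleftrightarrow> nfr Z \<and> complete k Z"

definition nfr_hom :: "('a \<Rightarrow> 'b) \<Rightarrow> 'a nfr \<Rightarrow> 'b nfr \<Rightarrow> bool" where
  "nfr_hom f Z1 Z2 \<longleftrightarrow>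
     (\<forall>c\<in>fst Z1. f c \<in> fst Z2) \<and>
     (\<forall>c\<in>fst Z1. \<forall>X. X \<subseteq> fst Z2 \<longrightarrow>
        ({c'\<in>fst Z1. f c' \<in> X} \<in> snd Z1 c \<longleftrightarrow> X \<in> snd Z2 (f c)))"

definition nfr_iso :: "('a \<Rightarrow> 'b) \<Rightarrow> 'a nfr \<Rightarrow> 'b nfr \<Rightarrow> bool" where
  "nfr_iso f Z1 Z2 \<longleftrightarrow> nfr_hom f Z1 Z2 \<and> bij_betw f (fst Z1) (fst Z2)"

(* The functor N on objects (on morphisms N f = f). *)
definition N_obj :: "'a mkf \<Rightarrow> 'a nfr" where
  "N_obj M = (fst M, \<lambda>x. {Y. Y \<subseteq> fst M \<and> (\<exists>R\<in>snd M. Rimg R x \<subseteq> Y)})"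

(* V_Z: choice maps v : C \<rightarrow> P(C) with v x \<in> \<nu> x; represented extensionally
   (v x = {} outside C) so that each map on C has a unique representative. *)
definition V_Z :: "'a nfr \<Rightarrow> ('a \<Rightarrow> 'a set) set" where
  "V_Z Z = {v. (\<forall>x\<in>fst Z. v x \<in> snd Z x) \<and> (\<forall>x. x \<notin> fst Z \<longrightarrow> v x = {})}"

definition R_v :: "'a nfr \<Rightarrow> ('a \<Rightarrow> 'a set) \<Rightarrow> ('a \<times> 'a) set" where
  "R_v Z v = {(x, y). x \<in> fst Z \<and> y \<in> v x}"

(* The functor H on objects (on morphisms H f = f). *)
definition H_obj :: "'a nfr \<Rightarrow> 'a mkf" where
  "H_obj Z = (fst Z, R_v Z ` V_Z Z)"

end

theory Submission
  imports Defs
begin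

text \<open>A multi-relational frame is seen through the successor sets \<open>R[x]\<close> of its relations: \<open>N\<close>
  keeps only the filters they generate, and \<open>H\<close> realises an arbitrary monotone neighbourhood
  function as the family of all relations obtained by choosing one neighbourhood at every point.
  Choosing the neighbourhood freely at a single point shows that \<open>N (H Z)\<close> recovers \<open>\<nu>\<close>, and the
  identity \<open>M \<rightarrow> H (N M)\<close> is an isomorphism because two frames on the same carrier are isomorphic
  via the identity as soon as their successor sets generate the same filters. Downward
  directedness and \<open>\<kappa>\<close>-completeness correspond to each other by intersecting chosen relations or
  neighbourhoods pointwise.\<close>

definition monotone_nfr :: "'a nfr \<Rightarrow> bool" where
  "monotone_nfr Z \<longleftrightarrow>
     (\<forall>c\<in>fst Z. fst Z \<in> snd Z c) \<and>
     (\<forall>c\<in>fst Z. \<forall>X Y. X \<in> snd Z c \<and> X \<subseteq> Y \<and> Y \<subseteq> fst Z \<longrightarrow> Y \<in> snd Z c)"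

lemma complete_iff_monotone_nfr_meet_closed:
  "complete k Z \<longleftrightarrow> monotone_nfr Z \<and>
     (\<forall>c\<in>fst Z. \<forall>S'. S' \<noteq> {} \<and> S' \<subseteq> snd Z c \<and> (card_of S', k) \<in> ordLess
         \<longrightarrow> \<Inter>S' \<in> snd Z c)"
  unfolding complete_def monotone_nfr_def by blast

lemma complete_imp_monotone_nfr: "complete k Z \<Longrightarrow> monotone_nfr Z"
  by (simp add: complete_iff_monotone_nfr_meet_closed)

lemma monotone_nfrD:
  assumes "monotone_nfr Z" "c \<in> fst Z"
  shows monotone_nfr_top: "fst Z \<in> snd Z c"
    and monotone_nfr_upward: "X \<in> snd Z c \<Longrightarrow> X \<subseteq> Y \<Longrightarrow> Y \<subseteq> fst Z \<Longrightarrow> Y \<in> snd Z c"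
  using assms by (auto simp: monotone_nfr_def)

lemma nfr_neighbourhood_subset: "nfr Z \<Longrightarrow> c \<in> fst Z \<Longrightarrow> X \<in> snd Z c \<Longrightarrow> X \<subseteq> fst Z"
  by (auto simp: nfr_def)

lemma Rimg_mono: "R \<subseteq> R' \<Longrightarrow> Rimg R x \<subseteq> Rimg R' x"
  by (auto simp: Rimg_def)

lemma mkf_Rimg_subset: "mkf M \<Longrightarrow> R \<in> snd M \<Longrightarrow> Rimg R x \<subseteq> fst M"
  by (auto simp: mkf_def Rimg_def)

lemma fst_N_obj [simp]: "fst (N_obj M) = fst M"
  by (simp add: N_obj_def)

lemma mem_snd_N_obj:
  "Y \<in> snd (N_obj M) x \<longleftrightarrow> Y \<subseteq> fst M \<and> (\<exists>R\<in>snd M. Rimg R x \<subseteq> Y)"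
  by (simp add: N_obj_def)

lemma fst_H_obj [simp]: "fst (H_obj Z) = fst Z"
  by (simp add: H_obj_def)

lemma snd_H_obj [simp]: "snd (H_obj Z) = R_v Z ` V_Z Z"
  by (simp add: H_obj_def)

lemma V_Z_choice:
  assumes "\<And>x. x \<in> fst Z \<Longrightarrow> g x \<in> snd Z x"
  shows "(\<lambda>x. if x \<in> fst Z then g x else {}) \<in> V_Z Z"
  using assms by (simp add: V_Z_def)

lemma V_Z_mem: "v \<in> V_Z Z \<Longrightarrow> x \<in> fst Z \<Longrightarrow> v x \<in> snd Z x"
  by (simp add: V_Z_def)

lemma Rimg_R_v: "x \<in> fst Z \<Longrightarrow> Rimg (R_v Z v) x = v x"
  by (auto simp: Rimg_def R_v_def)

lemma R_v_subset_carrier: "nfr Z \<Longrightarrow> v \<in> V_Z Z \<Longrightarrow> R_v Z v \<subseteq> fst Z \<times> fst Z"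
  by (auto simp: R_v_def V_Z_def nfr_def)

lemma mem_R_v: "(x, y) \<in> R_v Z v \<longleftrightarrow> x \<in> fst Z \<and> y \<in> v x"
  by (simp add: R_v_def)

lemma nfr_N_obj: "mkf M \<Longrightarrow> nfr (N_obj M)"
  by (auto simp: nfr_def mkf_def mem_snd_N_obj)

lemma monotone_nfr_N_obj:
  assumes "mkf M"
  shows "monotone_nfr (N_obj M)"
proof -
  obtain R where "R \<in> snd M" using assms by (auto simp: mkf_def)
  then show ?thesis
    using mkf_Rimg_subset[OF assms] unfolding monotone_nfr_def mem_snd_N_obj fst_N_obj
    by (blast intro: subset_trans)
qed

lemma N_obj_meet_closed:
  assumes dd: "downward_directed k M"
    and S': "S' \<noteq> {}" "S' \<subseteq> snd (N_obj M) c" "(card_of S', k) \<in> ordLess"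
  shows "\<Inter>S' \<in> snd (N_obj M) c"
proof -
  have "\<forall>Y\<in>S'. \<exists>R. R \<in> snd M \<and> Rimg R c \<subseteq> Y"
    using S'(2) by (auto simp: subset_iff mem_snd_N_obj)
  then have "\<exists>g. \<forall>Y\<in>S'. g Y \<in> snd M \<and> Rimg (g Y) c \<subseteq> Y" by (rule bchoice)
  then obtain g where g: "\<And>Y. Y \<in> S' \<Longrightarrow> g Y \<in> snd M \<and> Rimg (g Y) c \<subseteq> Y" by blast
  have "(card_of (g ` S'), k) \<in> ordLess"
    using ordLeq_ordLess_trans[OF card_of_image S'(3)] .
  moreover have "g ` S' \<subseteq> snd M" using g by blast
  ultimately have "\<exists>R\<in>snd M. R \<subseteq> (fst M \<times> fst M) \<inter> \<Inter>(g ` S')"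
    using dd[unfolded downward_directed_def, rule_format, of "g ` S'"] by blast
  then obtain R where R: "R \<in> snd M" "R \<subseteq> \<Inter>(g ` S')" by blast
  have "Rimg R c \<subseteq> Y" if Y: "Y \<in> S'" for Y
  proof -
    have "R \<subseteq> g Y" using R(2) Y by blast
    from Rimg_mono[OF this, of c] g[OF Y] show ?thesis by blast
  qed
  then have "Rimg R c \<subseteq> \<Inter>S'" by blast
  moreover obtain Y where Y: "Y \<in> S'" using S'(1) by blast
  then have "Y \<in> snd (N_obj M) c" using S'(2) by blast
  then have "\<Inter>S' \<subseteq> fst M" using Y by (auto simp: mem_snd_N_obj)
  ultimately show ?thesis using R(1) by (auto simp: mem_snd_N_obj)
qed

lemma NFR_N_obj:
  assumes "MKF k M"
  shows "NFR k (N_obj M)"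
proof -
  have "mkf M" "downward_directed k M" using assms by (simp_all add: MKF_def)
  then show ?thesis
    unfolding NFR_def complete_iff_monotone_nfr_meet_closed
    by (blast intro: nfr_N_obj monotone_nfr_N_obj N_obj_meet_closed)
qed

lemma mkf_H_obj:
  assumes "nfr Z" "monotone_nfr Z"
  shows "mkf (H_obj Z)"
proof -
  have "(\<lambda>x. if x \<in> fst Z then fst Z else {}) \<in> V_Z Z"
    by (rule V_Z_choice) (rule monotone_nfr_top[OF assms(2)])
  then show ?thesis
    using assms(1) R_v_subset_carrier[OF assms(1)] by (auto simp: mkf_def nfr_def)
qed

lemma downward_directed_H_obj:
  assumes "NFR k Z"
  shows "downward_directed k (H_obj Z)"
  unfolding downward_directed_def
proof (intro allI impI, elim conjE)
  fix S' assume S': "S' \<subseteq> snd (H_obj Z)" "(card_of S', k) \<in> ordLess"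
  have nfr: "nfr Z" and mono: "monotone_nfr Z"
    using assms complete_imp_monotone_nfr[of k Z] unfolding NFR_def by simp_all
  define g where "g x = (if S' = {} then fst Z else \<Inter>((\<lambda>R. Rimg R x) ` S'))" for x
  have "g x \<in> snd Z x" if x: "x \<in> fst Z" for x
  proof (cases "S' = {}")
    case True
    then show ?thesis using monotone_nfr_top[OF mono x] by (simp add: g_def)
  next
    case False
    have "(\<lambda>R. Rimg R x) ` S' \<subseteq> snd Z x"
      using S'(1) x by (auto simp: Rimg_R_v V_Z_mem)
    moreover have "(card_of ((\<lambda>R. Rimg R x) ` S'), k) \<in> ordLess"
      using ordLeq_ordLess_trans[OF card_of_image S'(2)] .
    ultimately show ?thesis
      using assms x False by (auto simp: g_def NFR_def complete_def)
  qed
  then have v: "(\<lambda>x. if x \<in> fst Z then g x else {}) \<in> V_Z Z" by (rule V_Z_choice)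
  have "R_v Z (\<lambda>x. if x \<in> fst Z then g x else {}) \<subseteq> \<Inter>S'"
    by (auto simp: mem_R_v g_def Rimg_def split: if_splits)
  then show "\<exists>R\<in>snd (H_obj Z). R \<subseteq> (fst (H_obj Z) \<times> fst (H_obj Z)) \<inter> \<Inter>S'"
    using v R_v_subset_carrier[OF nfr v] by auto
qed

lemma MKF_H_obj: "NFR k Z \<Longrightarrow> MKF k (H_obj Z)"
  using mkf_H_obj[of Z] downward_directed_H_obj[of k Z] complete_imp_monotone_nfr[of k Z]
  unfolding MKF_def NFR_def by blast

lemma nfr_hom_N_obj:
  assumes M1: "mkf M1" and M2: "mkf M2" and f: "mkf_hom f M1 M2"
  shows "nfr_hom f (N_obj M1) (N_obj M2)"
proof -
  have "(\<exists>R\<in>snd M1. Rimg R c \<subseteq> {c'\<in>fst M1. f c' \<in> X}) \<longleftrightarrow> (\<exists>R\<in>snd M2. Rimg R (f c) \<subseteq> X)"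
    if c: "c \<in> fst M1" and X: "X \<subseteq> fst M2" for c X
  proof
    assume "\<exists>R\<in>snd M1. Rimg R c \<subseteq> {c'\<in>fst M1. f c' \<in> X}"
    then obtain R1 where R1: "R1 \<in> snd M1" "Rimg R1 c \<subseteq> {c'\<in>fst M1. f c' \<in> X}" by blast
    obtain R2 where R2: "R2 \<in> snd M2"
      "\<forall>u\<in>fst M2. (f c, u) \<in> R2 \<longrightarrow> (\<exists>y\<in>fst M1. (c, y) \<in> R1 \<and> f y = u)"
      using f c R1(1) unfolding mkf_hom_def by blast
    have "Rimg R2 (f c) \<subseteq> X"
      using R2 R1(2) mkf_Rimg_subset[OF M2 R2(1)] by (fastforce simp: Rimg_def)
    then show "\<exists>R\<in>snd M2. Rimg R (f c) \<subseteq> X" using R2(1) by blast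
  next
    assume "\<exists>R\<in>snd M2. Rimg R (f c) \<subseteq> X"
    then obtain R2 where R2: "R2 \<in> snd M2" "Rimg R2 (f c) \<subseteq> X" by blast
    obtain R1 where R1: "R1 \<in> snd M1" "\<forall>y\<in>fst M1. (c, y) \<in> R1 \<longrightarrow> (f c, f y) \<in> R2"
      using f c R2(1) unfolding mkf_hom_def by blast
    have "Rimg R1 c \<subseteq> {c'\<in>fst M1. f c' \<in> X}"
      using R1 R2(2) mkf_Rimg_subset[OF M1 R1(1)] by (fastforce simp: Rimg_def)
    then show "\<exists>R\<in>snd M1. Rimg R c \<subseteq> {c'\<in>fst M1. f c' \<in> X}" using R1(1) by blast
  qed
  with f show ?thesis by (auto simp: nfr_hom_def mkf_hom_def mem_snd_N_obj)
qed

lemma nfr_homD: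
  assumes "nfr_hom f Z1 Z2" "c \<in> fst Z1"
  shows nfr_hom_carrier: "f c \<in> fst Z2"
    and nfr_hom_preimage_iff:
      "X \<subseteq> fst Z2 \<Longrightarrow> {c'\<in>fst Z1. f c' \<in> X} \<in> snd Z1 c \<longleftrightarrow> X \<in> snd Z2 (f c)"
  using assms by (simp_all add: nfr_hom_def)

lemma V_Z_pullback:
  assumes "nfr Z2" "nfr_hom f Z1 Z2" "v2 \<in> V_Z Z2"
  shows "(\<lambda>x. if x \<in> fst Z1 then {y\<in>fst Z1. f y \<in> v2 (f x)} else {}) \<in> V_Z Z1"
proof (rule V_Z_choice)
  fix x assume x: "x \<in> fst Z1"
  have fx: "f x \<in> fst Z2" by (rule nfr_hom_carrier[OF assms(2) x])
  have "v2 (f x) \<subseteq> fst Z2" "v2 (f x) \<in> snd Z2 (f x)"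
    using nfr_neighbourhood_subset[OF assms(1) fx] V_Z_mem[OF assms(3) fx] by auto
  then show "{y\<in>fst Z1. f y \<in> v2 (f x)} \<in> snd Z1 x"
    using nfr_hom_preimage_iff[OF assms(2) x] by blast
qed

lemma V_Z_pushforward:
  assumes Z1: "nfr Z1" "monotone_nfr Z1" and Z2: "monotone_nfr Z2"
    and f: "nfr_hom f Z1 Z2" and v1: "v1 \<in> V_Z Z1" and x: "x \<in> fst Z1"
  shows "(\<lambda>z. if z \<in> fst Z2 then (if z = f x then f ` v1 x else fst Z2) else {}) \<in> V_Z Z2"
proof -
  have v1x: "v1 x \<in> snd Z1 x" "v1 x \<subseteq> fst Z1"
    using V_Z_mem[OF v1 x] nfr_neighbourhood_subset[OF Z1(1) x] by auto
  have image: "f ` v1 x \<subseteq> fst Z2"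
    using v1x(2) nfr_hom_carrier[OF f] by blast
  have "{c'\<in>fst Z1. f c' \<in> f ` v1 x} \<in> snd Z1 x"
    by (rule monotone_nfr_upward[OF Z1(2) x v1x(1)]) (use v1x(2) in auto)
  then have "f ` v1 x \<in> snd Z2 (f x)"
    using nfr_hom_preimage_iff[OF f x image] by simp
  then show ?thesis
    by (intro V_Z_choice) (simp add: monotone_nfr_top[OF Z2])
qed

lemma mkf_hom_H_obj:
  assumes Z1: "nfr Z1" "monotone_nfr Z1" and Z2: "nfr Z2" "monotone_nfr Z2"
    and f: "nfr_hom f Z1 Z2"
  shows "mkf_hom f (H_obj Z1) (H_obj Z2)"
proof -
  have "\<exists>R1\<in>R_v Z1 ` V_Z Z1. \<forall>y\<in>fst Z1. (x, y) \<in> R1 \<longrightarrow> (f x, f y) \<in> R_v Z2 v2"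
    if x: "x \<in> fst Z1" and v2: "v2 \<in> V_Z Z2" for x v2
    using V_Z_pullback[OF Z2(1) f v2] x nfr_hom_carrier[OF f x]
    by (intro bexI[OF _ imageI]) (auto simp: mem_R_v)
  moreover have "\<exists>R2\<in>R_v Z2 ` V_Z Z2. \<forall>u\<in>fst Z2. (f x, u) \<in> R2 \<longrightarrow>
      (\<exists>y\<in>fst Z1. (x, y) \<in> R_v Z1 v1 \<and> f y = u)"
    if x: "x \<in> fst Z1" and v1: "v1 \<in> V_Z Z1" for x v1
    using V_Z_pushforward[OF Z1 Z2(2) f v1 x] x nfr_hom_carrier[OF f x]
      nfr_neighbourhood_subset[OF Z1(1) x V_Z_mem[OF v1 x]]
    by (intro bexI[OF _ imageI]) (auto simp: mem_R_v)
  ultimately show ?thesis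
    using nfr_hom_carrier[OF f] by (auto simp: mkf_hom_def)
qed

lemma N_H_obj_neighbourhoods:
  assumes Z: "nfr Z" "monotone_nfr Z" and c: "c \<in> fst Z"
  shows "snd (N_obj (H_obj Z)) c = snd Z c"
proof (intro set_eqI iffI)
  fix X assume X: "X \<in> snd Z c"
  let ?v = "\<lambda>y. if y \<in> fst Z then (if y = c then X else fst Z) else {}"
  have "?v \<in> V_Z Z"
    by (rule V_Z_choice) (simp add: X monotone_nfr_top[OF Z(2)])
  moreover have "Rimg (R_v Z ?v) c = X" using c by (simp add: Rimg_R_v)
  moreover have "X \<subseteq> fst Z" by (rule nfr_neighbourhood_subset[OF Z(1) c X])
  ultimately show "X \<in> snd (N_obj (H_obj Z)) c"
    unfolding mem_snd_N_obj fst_H_obj snd_H_obj by blast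
next
  fix X assume "X \<in> snd (N_obj (H_obj Z)) c"
  then obtain v where v: "v \<in> V_Z Z" "Rimg (R_v Z v) c \<subseteq> X" and X: "X \<subseteq> fst Z"
    unfolding mem_snd_N_obj fst_H_obj snd_H_obj by blast
  have "v c \<subseteq> X" using v(2) c by (simp add: Rimg_R_v)
  from monotone_nfr_upward[OF Z(2) c V_Z_mem[OF v(1) c] this X] show "X \<in> snd Z c" .
qed

lemma nfr_iso_id_N_H:
  assumes "nfr Z" "monotone_nfr Z"
  shows "nfr_iso id Z (N_obj (H_obj Z))"
proof -
  have "{c'\<in>fst Z. c' \<in> X} = X" if "X \<subseteq> fst Z" for X
    using that by blast
  then show ?thesis
    using N_H_obj_neighbourhoods[OF assms] by (simp add: nfr_iso_def nfr_hom_def)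
qed

lemma Rimg_refines_if_same_neighbourhoods:
  assumes "mkf M1" "mkf M2" "snd (N_obj M1) x = snd (N_obj M2) x" "R2 \<in> snd M2"
  shows "\<exists>R1\<in>snd M1. Rimg R1 x \<subseteq> Rimg R2 x"
proof -
  have "Rimg R2 x \<in> snd (N_obj M2) x"
    using mkf_Rimg_subset[OF assms(2,4)] assms(4) by (auto simp: mem_snd_N_obj)
  then have "Rimg R2 x \<in> snd (N_obj M1) x" using assms(3) by simp
  then show ?thesis by (simp add: mem_snd_N_obj)
qed

lemma mkf_iso_id_if_same_neighbourhoods:
  assumes M1: "mkf M1" and M2: "mkf M2" and carrier: "fst M1 = fst M2"
    and nbhd: "\<And>x. x \<in> fst M1 \<Longrightarrow> snd (N_obj M1) x = snd (N_obj M2) x"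
  shows "mkf_iso id M1 M2"
proof -
  have "\<exists>R1\<in>snd M1. \<forall>y\<in>fst M1. (x, y) \<in> R1 \<longrightarrow> (x, y) \<in> R2"
    if x: "x \<in> fst M1" and R2: "R2 \<in> snd M2" for x R2
  proof -
    obtain R1 where "R1 \<in> snd M1" "Rimg R1 x \<subseteq> Rimg R2 x"
      using Rimg_refines_if_same_neighbourhoods[OF M1 M2 nbhd[OF x] R2] by blast
    then show ?thesis by (auto simp: Rimg_def)
  qed
  moreover have "\<exists>R2\<in>snd M2. \<forall>u\<in>fst M2. (x, u) \<in> R2 \<longrightarrow> (\<exists>y\<in>fst M1. (x, y) \<in> R1 \<and> y = u)"
    if x: "x \<in> fst M1" and R1: "R1 \<in> snd M1" for x R1
  proof -
    obtain R2 where "R2 \<in> snd M2" "Rimg R2 x \<subseteq> Rimg R1 x"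
      using Rimg_refines_if_same_neighbourhoods[OF M2 M1 nbhd[OF x, symmetric] R1] by blast
    then show ?thesis using carrier by (auto simp: Rimg_def)
  qed
  ultimately show ?thesis
    using carrier by (simp add: mkf_iso_def mkf_hom_def)
qed

lemma mkf_iso_id_H_N:
  assumes "mkf M"
  shows "mkf_iso id M (H_obj (N_obj M))"
proof (rule mkf_iso_id_if_same_neighbourhoods)
  have "nfr (N_obj M)" "monotone_nfr (N_obj M)"
    using assms by (simp_all add: nfr_N_obj monotone_nfr_N_obj)
  then show "mkf (H_obj (N_obj M))" by (rule mkf_H_obj)
  show "snd (N_obj M) x = snd (N_obj (H_obj (N_obj M))) x" if "x \<in> fst M" for x
    using N_H_obj_neighbourhoods[OF \<open>nfr (N_obj M)\<close> \<open>monotone_nfr (N_obj M)\<close>] that by simp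
qed (use assms in simp_all)

theorem theorem6p4:
  fixes k :: "'k rel"
  assumes "Card_order k"
  shows
    "(\<forall>M :: 'a mkf. MKF k M \<longrightarrow> NFR k (N_obj M)) \<and>
     (\<forall>Z :: 'a nfr. NFR k Z \<longrightarrow> MKF k (H_obj Z)) \<and>
     (\<forall>(M1 :: 'a mkf) (M2 :: 'b mkf) f. MKF k M1 \<and> MKF k M2 \<and> mkf_hom f M1 M2
         \<longrightarrow> nfr_hom f (N_obj M1) (N_obj M2)) \<and>
     (\<forall>(Z1 :: 'a nfr) (Z2 :: 'b nfr) f. NFR k Z1 \<and> NFR k Z2 \<and> nfr_hom f Z1 Z2
         \<longrightarrow> mkf_hom f (H_obj Z1) (H_obj Z2)) \<and>
     (\<forall>M :: 'a mkf. MKF k M \<longrightarrow> mkf_iso id M (H_obj (N_obj M))) \<and>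
     (\<forall>Z :: 'a nfr. NFR k Z \<longrightarrow> nfr_iso id Z (N_obj (H_obj Z)))"
proof (intro conjI allI impI)
  show "NFR k (N_obj M)" if "MKF k M" for M :: "'a mkf"
    using that by (rule NFR_N_obj)
  show "MKF k (H_obj Z)" if "NFR k Z" for Z :: "'a nfr"
    using that by (rule MKF_H_obj)
  show "nfr_hom f (N_obj M1) (N_obj M2)"
    if "MKF k M1 \<and> MKF k M2 \<and> mkf_hom f M1 M2" for M1 :: "'a mkf" and M2 :: "'b mkf" and f
    using that by (simp add: MKF_def nfr_hom_N_obj)
  show "mkf_hom f (H_obj Z1) (H_obj Z2)"
    if "NFR k Z1 \<and> NFR k Z2 \<and> nfr_hom f Z1 Z2" for Z1 :: "'a nfr" and Z2 :: "'b nfr" and f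
    using that mkf_hom_H_obj[of Z1 Z2 f] complete_imp_monotone_nfr[of k Z1]
      complete_imp_monotone_nfr[of k Z2]
    unfolding NFR_def by blast
  show "mkf_iso id M (H_obj (N_obj M))" if "MKF k M" for M :: "'a mkf"
    using that by (simp add: MKF_def mkf_iso_id_H_N)
  show "nfr_iso id Z (N_obj (H_obj Z))" if "NFR k Z" for Z :: "'a nfr"
    using that nfr_iso_id_N_H[of Z] complete_imp_monotone_nfr[of k Z] unfolding NFR_def by blast
qed

end
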